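(* Let $X$ be a $C^*$-correspondence over $A$ with left action $\phi$, let $Y=X\oplus T$ over $B=A\oplus T$ be formed by adding the tail $T=(\ker\phi)^{(\mathbb N)}$, and let $(\tilde\pi,\tilde t)$ be a representation of $Y$. Then there is a projection $p$ in the multiplier algebra $\mathcal M(C^*(\tilde\pi,\tilde t))$ such that for all $a\in A$, $\xi\in X$ and $\vec f=(f_1,f_2,\dots)\in T$: (1) $p\,\tilde t(\xi,\vec f)=\tilde t(\xi,(f_1,0,0,\dots))$; (2) $\tilde t(\xi,\vec f)\,p=\tilde t(\xi,\vec 0)$; (3) $p\,\tilde\pi(a,\vec f)=\tilde\pi(a,\vec f)\,p=\tilde\pi(a,\vec 0)$.
   Context: A $C^*$-correspondence over $A$ is a right Hilbert $A$-module $X$ with inner product $\langle\cdot,\cdot\rangle_A$ and a $*$-homomorphism $\phi:A\to\mathcal L(X)$. A representation of $Y$ over $B$ in a $C^*$-algebra $C$ is a pair $(\tilde\pi,\tilde t)$, $\tilde\pi:B\to C$ a $*$-homomorphism, $\tilde t:Y\to C$ linear, with $\tilde t(y)^*\tilde t(y')=\tilde\pi(\langle y,y'\rangle_B)$, $\tilde t(\phi_B(b)y)=\tilde\pi(b)\tilde t(y)$, $\tilde t(yb)=\tilde t(y)\tilde\pi(b)$; $C^*(\tilde\pi,\tilde t)$ is the $C^*$-subalgebra of $C$ generated by $\tilde\pi(B)\cup\tilde t(Y)$. Adding the tail: $T:=(\ker\phi)^{(\mathbb N)}$ is the $c_0$-direct sum of copies of $\ker\phi$ (coordinatewise operations), a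 Hilbert module over itself with $\langle\vec f,\vec g\rangle=\vec f^*\vec g$; $B:=A\oplus T$, $Y:=X\oplus T$ with $(\xi,\vec f)(a,\vec g)=(\xi a,\vec f\vec g)$, $\langle(\xi,\vec f),(\nu,\vec g)\rangle_B=(\langle\xi,\nu\rangle_A,\vec f^*\vec g)$, $\phi_B(a,\vec f)(\xi,\vec g)=(\phi(a)\xi,(ag_1,f_1g_2,f_2g_3,\dots))$. *)

theory Defs
  imports Complex_Main
begin

class complex_scale =
  fixes scaleC :: "complex \<Rightarrow> 'a \<Rightarrow> 'a"  (infixr \<open>*\<^sub>C\<close> 75)

class cvec = real_normed_vector + complex_scale +
  assumes scaleC_add_right: "c *\<^sub>C (x + y) = c *\<^sub>C x + c *\<^sub>C y"
    and scaleC_add_left: "(c + d) *\<^sub>C x = c *\<^sub>C x + d *\<^sub>C x"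
    and scaleC_scaleC: "c *\<^sub>C (d *\<^sub>C x) = (c * d) *\<^sub>C x"
    and scaleC_one: "1 *\<^sub>C x = x"
    and scaleR_scaleC: "scaleR r x = (complex_of_real r) *\<^sub>C x"
    and norm_scaleC: "norm (c *\<^sub>C x) = cmod c * norm x"

class cbanach = cvec + complete_space

class cstar_alg = cbanach + real_normed_algebra +
  fixes cstar :: "'a \<Rightarrow> 'a"
  assumes scaleC_mult_left: "(c *\<^sub>C x) * y = c *\<^sub>C (x * y)"
    and scaleC_mult_right: "x * (c *\<^sub>C y) = c *\<^sub>C (x * y)"
    and cstar_add: "cstar (x + y) = cstar x + cstar y"
    and cstar_scaleC: "cstar (c *\<^sub>C x) = cnj c *\<^sub>C cstar x"
    and cstar_mult: "cstar (x * y) = cstar y * cstar x"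
    and cstar_cstar: "cstar (cstar x) = x"
    and cstar_identity: "norm (cstar x * x) = norm x * norm x"

definition positive :: "'a::cstar_alg \<Rightarrow> bool" where
  "positive a \<longleftrightarrow> (\<exists>b. a = cstar b * b)"

definition hilbert_module ::
  "('x::cbanach \<Rightarrow> 'x \<Rightarrow> 'a::cstar_alg) \<Rightarrow> ('x \<Rightarrow> 'a \<Rightarrow> 'x) \<Rightarrow> bool" where
  "hilbert_module ip rmul \<longleftrightarrow>
     (\<forall>x y a. rmul (x + y) a = rmul x a + rmul y a) \<and>
     (\<forall>x a b. rmul x (a + b) = rmul x a + rmul x b) \<and>
     (\<forall>x a b. rmul (rmul x a) b = rmul x (a * b)) \<and>
     (\<forall>x a c. rmul (c *\<^sub>C x) a = c *\<^sub>C rmul x a \<and> rmul x (c *\<^sub>C a) = c *\<^sub>C rmul x a) \<and>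
     (\<forall>x y z. ip x (y + z) = ip x y + ip x z) \<and>
     (\<forall>x y c. ip x (c *\<^sub>C y) = c *\<^sub>C ip x y) \<and>
     (\<forall>x y a. ip x (rmul y a) = ip x y * a) \<and>
     (\<forall>x y. ip y x = cstar (ip x y)) \<and>
     (\<forall>x. positive (ip x x)) \<and>
     (\<forall>x. ip x x = 0 \<longrightarrow> x = 0) \<and>
     (\<forall>x. norm x = sqrt (norm (ip x x)))"

definition adjointable :: "('x \<Rightarrow> 'x \<Rightarrow> 'a) \<Rightarrow> ('x \<Rightarrow> 'x) \<Rightarrow> bool" where
  "adjointable ip S \<longleftrightarrow> (\<exists>S'. \<forall>x y. ip (S x) y = ip x (S' y))"

definition cstar_correspondence ::
  "('x::cbanach \<Rightarrow> 'x \<Rightarrow> 'a::cstar_alg) \<Rightarrow> ('x \<Rightarrow> 'a \<Rightarrow> 'x) \<Rightarrow> ('a \<Rightarrow> 'x \<Rightarrow> 'x) \<Rightarrow> bool" where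
  "cstar_correspondence ip rmul phi \<longleftrightarrow>
     hilbert_module ip rmul \<and>
     (\<forall>a. adjointable ip (phi a)) \<and>
     (\<forall>a b x. phi (a + b) x = phi a x + phi b x) \<and>
     (\<forall>a c x. phi (c *\<^sub>C a) x = c *\<^sub>C phi a x) \<and>
     (\<forall>a b x. phi (a * b) x = phi a (phi b x)) \<and>
     (\<forall>a x y. ip (phi (cstar a) x) y = ip x (phi a y))"

definition ker_phi :: "('a \<Rightarrow> 'x::zero \<Rightarrow> 'x) \<Rightarrow> 'a set" where
  "ker_phi phi = {a. \<forall>x. phi a x = 0}"

text \<open>T = c_0-direct sum of copies of ker phi; sequences are indexed from 0,
  so f 0 is the first coordinate f_1.\<close>
definition tail :: "('a::cstar_alg \<Rightarrow> 'x::zero \<Rightarrow> 'x) \<Rightarrow> (nat \<Rightarrow> 'a) set" where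
  "tail phi = {f. (\<forall>n. f n \<in> ker_phi phi) \<and> (\<lambda>n. norm (f n)) \<longlonglongrightarrow> 0}"

definition B_add :: "'a::cstar_alg \<times> (nat \<Rightarrow> 'a) \<Rightarrow> 'a \<times> (nat \<Rightarrow> 'a) \<Rightarrow> 'a \<times> (nat \<Rightarrow> 'a)" where
  "B_add b b' = (fst b + fst b', \<lambda>n. snd b n + snd b' n)"
definition B_scale :: "complex \<Rightarrow> 'a::cstar_alg \<times> (nat \<Rightarrow> 'a) \<Rightarrow> 'a \<times> (nat \<Rightarrow> 'a)" where
  "B_scale c b = (c *\<^sub>C fst b, \<lambda>n. c *\<^sub>C snd b n)"
definition B_mult :: "'a::cstar_alg \<times> (nat \<Rightarrow> 'a) \<Rightarrow> 'a \<times> (nat \<Rightarrow> 'a) \<Rightarrow> 'a \<times> (nat \<Rightarrow> 'a)" where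
  "B_mult b b' = (fst b * fst b', \<lambda>n. snd b n * snd b' n)"
definition B_star :: "'a::cstar_alg \<times> (nat \<Rightarrow> 'a) \<Rightarrow> 'a \<times> (nat \<Rightarrow> 'a)" where
  "B_star b = (cstar (fst b), \<lambda>n. cstar (snd b n))"

definition Y_add :: "'x::cbanach \<times> (nat \<Rightarrow> 'a::cstar_alg) \<Rightarrow> 'x \<times> (nat \<Rightarrow> 'a) \<Rightarrow> 'x \<times> (nat \<Rightarrow> 'a)" where
  "Y_add y y' = (fst y + fst y', \<lambda>n. snd y n + snd y' n)"
definition Y_scale :: "complex \<Rightarrow> 'x::cbanach \<times> (nat \<Rightarrow> 'a::cstar_alg) \<Rightarrow> 'x \<times> (nat \<Rightarrow> 'a)" where
  "Y_scale c y = (c *\<^sub>C fst y, \<lambda>n. c *\<^sub>C snd y n)"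
definition Y_rmul :: "('x \<Rightarrow> 'a \<Rightarrow> 'x) \<Rightarrow> 'x \<times> (nat \<Rightarrow> 'a::cstar_alg) \<Rightarrow> 'a \<times> (nat \<Rightarrow> 'a) \<Rightarrow> 'x \<times> (nat \<Rightarrow> 'a)" where
  "Y_rmul rmul y b = (rmul (fst y) (fst b), \<lambda>n. snd y n * snd b n)"
definition Y_ip :: "('x \<Rightarrow> 'x \<Rightarrow> 'a) \<Rightarrow> 'x \<times> (nat \<Rightarrow> 'a::cstar_alg) \<Rightarrow> 'x \<times> (nat \<Rightarrow> 'a) \<Rightarrow> 'a \<times> (nat \<Rightarrow> 'a)" where
  "Y_ip ip y y' = (ip (fst y) (fst y'), \<lambda>n. cstar (snd y n) * snd y' n)"
definition Y_lmul :: "('a \<Rightarrow> 'x \<Rightarrow> 'x) \<Rightarrow> 'a::cstar_alg \<times> (nat \<Rightarrow> 'a) \<Rightarrow> 'x \<times> (nat \<Rightarrow> 'a) \<Rightarrow> 'x \<times> (nat \<Rightarrow> 'a)" where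
  "Y_lmul phi b y = (phi (fst b) (fst y),
      \<lambda>n. if n = 0 then fst b * snd y 0 else snd b (n - 1) * snd y n)"

definition is_rep ::
  "('x::cbanach \<Rightarrow> 'x \<Rightarrow> 'a::cstar_alg) \<Rightarrow> ('x \<Rightarrow> 'a \<Rightarrow> 'x) \<Rightarrow> ('a \<Rightarrow> 'x \<Rightarrow> 'x)
   \<Rightarrow> ('a \<times> (nat \<Rightarrow> 'a) \<Rightarrow> 'c::cstar_alg) \<Rightarrow> ('x \<times> (nat \<Rightarrow> 'a) \<Rightarrow> 'c) \<Rightarrow> bool" where
  "is_rep ip rmul phi rpi t \<longleftrightarrow>
     (\<forall>a f a' f'. f \<in> tail phi \<longrightarrow> f' \<in> tail phi \<longrightarrow>
        rpi (B_add (a, f) (a', f')) = rpi (a, f) + rpi (a', f') \<and>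
        rpi (B_mult (a, f) (a', f')) = rpi (a, f) * rpi (a', f')) \<and>
     (\<forall>a f c. f \<in> tail phi \<longrightarrow>
        rpi (B_scale c (a, f)) = c *\<^sub>C rpi (a, f) \<and>
        rpi (B_star (a, f)) = cstar (rpi (a, f))) \<and>
     (\<forall>\<xi> f \<nu> g. f \<in> tail phi \<longrightarrow> g \<in> tail phi \<longrightarrow>
        t (Y_add (\<xi>, f) (\<nu>, g)) = t (\<xi>, f) + t (\<nu>, g) \<and>
        cstar (t (\<xi>, f)) * t (\<nu>, g) = rpi (Y_ip ip (\<xi>, f) (\<nu>, g))) \<and>
     (\<forall>\<xi> f c. f \<in> tail phi \<longrightarrow> t (Y_scale c (\<xi>, f)) = c *\<^sub>C t (\<xi>, f)) \<and>
     (\<forall>a f \<xi> g. f \<in> tail phi \<longrightarrow> g \<in> tail phi \<longrightarrow>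
        t (Y_lmul phi (a, f) (\<xi>, g)) = rpi (a, f) * t (\<xi>, g) \<and>
        t (Y_rmul rmul (\<xi>, g) (a, f)) = t (\<xi>, g) * rpi (a, f))"

definition cstar_subalg :: "'c::cstar_alg set \<Rightarrow> bool" where
  "cstar_subalg S \<longleftrightarrow> closed S \<and> 0 \<in> S \<and>
     (\<forall>x\<in>S. \<forall>y\<in>S. x + y \<in> S \<and> x * y \<in> S) \<and>
     (\<forall>x\<in>S. \<forall>c. c *\<^sub>C x \<in> S) \<and> (\<forall>x\<in>S. cstar x \<in> S)"

definition cstar_gen :: "'c::cstar_alg set \<Rightarrow> 'c set" where
  "cstar_gen G = \<Inter>{S. cstar_subalg S \<and> G \<subseteq> S}"

definition Cstar_rep :: "('a::cstar_alg \<Rightarrow> 'x::zero \<Rightarrow> 'x)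
   \<Rightarrow> ('a \<times> (nat \<Rightarrow> 'a) \<Rightarrow> 'c::cstar_alg) \<Rightarrow> ('x \<times> (nat \<Rightarrow> 'a) \<Rightarrow> 'c) \<Rightarrow> 'c set" where
  "Cstar_rep phi rpi t = cstar_gen (rpi ` (UNIV \<times> tail phi) \<union> t ` (UNIV \<times> tail phi))"

text \<open>Multiplier algebra M(D) as double centralizers (L,R) on D: x L(y) = R(x) y.
  The element d*p is R d, p*d is L d.\<close>
definition double_centralizer :: "'c::cstar_alg set \<Rightarrow> ('c \<Rightarrow> 'c) \<Rightarrow> ('c \<Rightarrow> 'c) \<Rightarrow> bool" where
  "double_centralizer D L R \<longleftrightarrow> L ` D \<subseteq> D \<and> R ` D \<subseteq> D \<and>
     (\<forall>x\<in>D. \<forall>y\<in>D. x * L y = R x * y)"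

text \<open>Projection in M(D): p = p* (adjoint (L,R)* = (x. (R x* )*, x. (L x* )*))
  and p p = p (product (L,R)(L',R') = (L o L', R' o R)).\<close>
definition multiplier_projection :: "'c::cstar_alg set \<Rightarrow> ('c \<Rightarrow> 'c) \<Rightarrow> ('c \<Rightarrow> 'c) \<Rightarrow> bool" where
  "multiplier_projection D L R \<longleftrightarrow> double_centralizer D L R \<and>
     (\<forall>x\<in>D. L x = cstar (R (cstar x)) \<and> R x = cstar (L (cstar x))) \<and>
     (\<forall>x\<in>D. L (L x) = L x \<and> R (R x) = R x)"

end

(* The projection p is prescribed on the generators of C*(pi, t):
     p pi(a, f) = pi(a, 0),   p t(xi, f) = t(xi, (f_1, 0, 0, ...)),   p t(xi, f)* = t(xi, 0)*.
   Every prescribed value l = p g is orthogonal to every prescribed kernel part g' - l',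
   i.e. l* (g' - l') = 0. For the nine combinations of generator types this comes from the
   relations of the representation (the tail acts on the left by shifting coordinates, so
   pi(0, h) annihilates t(xi, (f_1, 0, ...))) together with the C*-identity.
   A compatible prescription on a *-closed generating set determines a left multiplier: on
   the span of the generators closed under right multiplication by generators, the value y
   forced on x satisfies y* y = y* x, so |y| <= |x|. Hence p is well defined and contractive,
   extends continuously to the generated C*-algebra, and is an idempotent left centralizer
   there; its right partner x |-> x p is x |-> cstar (p (cstar x)). *)

theory Submission
  imports Defs "HOL-Analysis.Analysis"
begin

lemma cstar_zero [simp]: "cstar (0::'a::cstar_alg) = 0"
  using cstar_add[of "0::'a" 0] by simp

lemma cstar_minus: "cstar (- x) = - cstar (x::'a::cstar_alg)"
  using cstar_add[of x "- x"] by (simp add: add_eq_0_iff)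

lemma cstar_diff: "cstar (x - y) = cstar x - cstar (y::'a::cstar_alg)"
  using cstar_add[of x "- y"] by (simp add: cstar_minus)

lemma norm_cstar [simp]: "norm (cstar x) = norm (x::'a::cstar_alg)"
proof -
  have le: "norm y \<le> norm (cstar y)" for y :: 'a
  proof (cases "y = 0")
    case False
    have "norm y * norm y = norm (cstar y * y)" by (simp add: cstar_identity)
    also have "\<dots> \<le> norm (cstar y) * norm y" by (rule norm_mult_ineq)
    finally show ?thesis using False by simp
  qed simp
  show ?thesis using le[of x] le[of "cstar x"] by (simp add: cstar_cstar)
qed

lemma cstar_self_mult_eq_zero_iff [simp]: "cstar x * x = 0 \<longleftrightarrow> x = (0::'a::cstar_alg)"
  using cstar_identity[of x] by auto

lemma mult_eq_zero_if_cstar_self_mult_eq_zero: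
  fixes x y :: "'a::cstar_alg"
  assumes "cstar x * x * y = 0"
  shows "x * y = 0"
proof -
  have "cstar (x * y) * (x * y) = cstar y * (cstar x * x * y)"
    by (simp add: cstar_mult mult.assoc)
  with assms show ?thesis by simp
qed

lemma cstar_mult_eq_zero_commute: "cstar x * y = 0 \<longleftrightarrow> cstar y * x = (0::'a::cstar_alg)"
  by (metis cstar_cstar cstar_mult cstar_zero)

lemma scaleC_zero_right [simp]: "c *\<^sub>C (0::'a::cvec) = 0"
  using scaleC_add_right[of c "0::'a" 0] by simp

lemma scaleC_zero_left [simp]: "0 *\<^sub>C (x::'a::cvec) = 0"
  using scaleC_add_left[of 0 0 x] by simp

lemma scaleC_minus_one: "(-1) *\<^sub>C (x::'a::cvec) = - x"
  using scaleR_scaleC[of "-1" x] by simp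

lemma scaleC_diff_right: "c *\<^sub>C (x - y) = c *\<^sub>C x - c *\<^sub>C (y::'a::cvec)"
  using scaleC_add_right[of c "x - y" y] by (simp add: eq_diff_eq)

lemma continuous_on_cstar: "continuous_on S (cstar :: 'a::cstar_alg \<Rightarrow> 'a)"
  by (rule lipschitz_on_continuous_on[of 1])
    (auto intro!: lipschitz_onI simp: dist_norm cstar_diff[symmetric])

lemma continuous_on_scaleC: "continuous_on S (\<lambda>x::'a::cvec. c *\<^sub>C x)"
  by (rule lipschitz_on_continuous_on[of "cmod c"])
    (auto intro!: lipschitz_onI simp: dist_norm scaleC_diff_right[symmetric] norm_scaleC)

lemma continuous_eq_on_closure:
  fixes f g :: "'a::topological_space \<Rightarrow> 'b::real_normed_vector"
  assumes "continuous_on (closure S) f" "continuous_on (closure S) g"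
    and "\<And>x. x \<in> S \<Longrightarrow> f x = g x" and "x \<in> closure S"
  shows "f x = g x"
proof -
  have "continuous_on (closure S) (\<lambda>x. f x - g x)"
    using assms(1,2) by (rule continuous_on_diff)
  then show ?thesis
    using continuous_constant_on_closure[of S "\<lambda>x. f x - g x" 0 x] assms(3,4) by simp
qed

lemma closure_closed_under_unop:
  assumes "continuous_on UNIV f" "\<And>x. x \<in> S \<Longrightarrow> f x \<in> S" "x \<in> closure S"
  shows "f x \<in> closure S"
  using image_closure_subset[of S f "closure S"] assms
  by (auto intro: continuous_on_subset closure_subset[THEN subsetD])

lemma closure_closed_under_binop:
  fixes f :: "'a::metric_space \<Rightarrow> 'a \<Rightarrow> 'a"
  assumes "continuous_on UNIV (\<lambda>p. f (fst p) (snd p))"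
    and "\<And>x y. x \<in> S \<Longrightarrow> y \<in> S \<Longrightarrow> f x y \<in> S"
    and "x \<in> closure S" "y \<in> closure S"
  shows "f x y \<in> closure S"
proof -
  have "(\<lambda>p. f (fst p) (snd p)) ` closure (S \<times> S) \<subseteq> closure S"
    using assms(1,2)
    by (intro image_closure_subset) (auto intro: continuous_on_subset closure_subset[THEN subsetD])
  then show ?thesis
    using assms(3,4) unfolding closure_Times image_subset_iff by (metis SigmaI fst_conv snd_conv)
qed

lemma cstar_subalg_closure:
  fixes S :: "'a::cstar_alg set"
  assumes "0 \<in> S"
    and add: "\<And>x y. x \<in> S \<Longrightarrow> y \<in> S \<Longrightarrow> x + y \<in> S"
    and mult: "\<And>x y. x \<in> S \<Longrightarrow> y \<in> S \<Longrightarrow> x * y \<in> S"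
    and scale: "\<And>x c. x \<in> S \<Longrightarrow> c *\<^sub>C x \<in> S"
    and star: "\<And>x. x \<in> S \<Longrightarrow> cstar x \<in> S"
  shows "cstar_subalg (closure S)"
  unfolding cstar_subalg_def
proof (intro conjI ballI allI)
  show "0 \<in> closure S" using assms(1) closure_subset by blast
next
  fix x y assume xy: "x \<in> closure S" "y \<in> closure S"
  have "continuous_on UNIV (\<lambda>p::'a \<times> 'a. fst p + snd p)"
    by (intro continuous_on_add continuous_on_fst continuous_on_snd continuous_on_id)
  from closure_closed_under_binop[of "(+)", OF this add xy] show "x + y \<in> closure S" .
  have "continuous_on UNIV (\<lambda>p::'a \<times> 'a. fst p * snd p)"
    by (intro continuous_on_mult continuous_on_fst continuous_on_snd continuous_on_id)
  from closure_closed_under_binop[of "(*)", OF this mult xy] show "x * y \<in> closure S" .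
next
  fix x c assume "x \<in> closure S"
  then show "c *\<^sub>C x \<in> closure S" "cstar x \<in> closure S"
    by (auto intro: closure_closed_under_unop[OF continuous_on_scaleC]
        closure_closed_under_unop[OF continuous_on_cstar] scale star)
qed simp

lemma closed_cstar_gen: "closed (cstar_gen G)"
  unfolding cstar_gen_def cstar_subalg_def by (rule closed_Inter) auto

lemma cstar_gen_eq_closure:
  assumes "cstar_subalg (closure S)" "G \<subseteq> S"
    and "\<And>T. cstar_subalg T \<Longrightarrow> G \<subseteq> T \<Longrightarrow> S \<subseteq> T"
  shows "cstar_gen G = closure S"
proof
  show "cstar_gen G \<subseteq> closure S"
    unfolding cstar_gen_def using assms(1,2) closure_subset by blast
  have "S \<subseteq> cstar_gen G"
    unfolding cstar_gen_def using assms(3) by blast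
  then show "closure S \<subseteq> cstar_gen G"
    using closed_cstar_gen by (rule closure_minimal)
qed

lemma cstar_gen_Un_cstar:
  assumes "B \<subseteq> A"
  shows "cstar_gen (A \<union> cstar ` B) = cstar_gen A"
proof -
  have "A \<union> cstar ` B \<subseteq> T \<longleftrightarrow> A \<subseteq> T" if "cstar_subalg T" for T
    using that assms unfolding cstar_subalg_def by blast
  then have "{T. cstar_subalg T \<and> A \<union> cstar ` B \<subseteq> T} = {T. cstar_subalg T \<and> A \<subseteq> T}"
    by blast
  then show ?thesis unfolding cstar_gen_def by simp
qed

section \<open>Multipliers from compatible prescriptions\<close>

(* (x, y) \<in> right_span G says that y = p x is forced for every left multiplier p with
   p g = l on G, because p (x h) = (p x) h. *)
inductive_set right_span :: "('a::cstar_alg \<times> 'a) set \<Rightarrow> ('a \<times> 'a) set" for G where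
  base: "(g, l) \<in> G \<Longrightarrow> (g, l) \<in> right_span G"
| add: "(x, y) \<in> right_span G \<Longrightarrow> (x', y') \<in> right_span G \<Longrightarrow> (x + x', y + y') \<in> right_span G"
| scale: "(x, y) \<in> right_span G \<Longrightarrow> (c *\<^sub>C x, c *\<^sub>C y) \<in> right_span G"
| mult: "(x, y) \<in> right_span G \<Longrightarrow> (h, k) \<in> G \<Longrightarrow> (x * h, y * h) \<in> right_span G"

lemma right_span_diff:
  assumes "(x, y) \<in> right_span G" "(x', y') \<in> right_span G"
  shows "(x - x', y - y') \<in> right_span G"
  using right_span.add[OF assms(1) right_span.scale[OF assms(2), of "-1"]]
  by (simp add: scaleC_minus_one)

lemma right_span_mult_closed:
  assumes "(x', y') \<in> right_span G" "(x, y) \<in> right_span G"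
  shows "\<exists>z. (x * x', z) \<in> right_span G"
  using assms
proof (induction rule: right_span.induct)
  case (base g l)
  then show ?case by (blast intro: right_span.mult)
next
  case (add x1 y1 x2 y2)
  then obtain z1 z2 where "(x * x1, z1) \<in> right_span G" "(x * x2, z2) \<in> right_span G" by blast
  from right_span.add[OF this] show ?case by (auto simp: distrib_left)
next
  case (scale x1 y1 c)
  then obtain z where "(x * x1, z) \<in> right_span G" by blast
  from right_span.scale[OF this, of c] show ?case by (auto simp: scaleC_mult_right)
next
  case (mult x1 y1 h k)
  then obtain z where "(x * x1, z) \<in> right_span G" by blast
  from right_span.mult[OF this mult.hyps(2)] show ?case by (auto simp: mult.assoc)
qed

lemma right_span_in_subalg:
  assumes "cstar_subalg S" "fst ` G \<subseteq> S" "(x, y) \<in> right_span G"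
  shows "x \<in> S"
  using assms(3)
proof (induction rule: right_span.induct)
  case (base g l)
  then show ?case using assms(2) by force
next
  case (mult x y h k)
  then have "h \<in> S" using assms(2) by force
  with mult.IH show ?case using assms(1) unfolding cstar_subalg_def by blast
qed (use assms(1) in \<open>simp_all add: cstar_subalg_def\<close>)

(* G prescribes p g = l; orthogonality says (p g)* (1 - p) g' = 0. *)
locale projection_prescription =
  fixes G :: "('a::cstar_alg \<times> 'a) set"
  assumes orthogonal: "\<And>g l g' l'. (g, l) \<in> G \<Longrightarrow> (g', l') \<in> G \<Longrightarrow> cstar l * (g' - l') = 0"
    and cstar_closed: "\<And>g l. (g, l) \<in> G \<Longrightarrow> \<exists>l'. (cstar g, l') \<in> G"
    and range_closed: "\<And>g l. (g, l) \<in> G \<Longrightarrow> (l, l) \<in> G"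
    and nonempty: "G \<noteq> {}"
begin

lemma right_span_orthogonal:
  assumes "(x, y) \<in> right_span G" "(x', y') \<in> right_span G"
  shows "cstar y * (x' - y') = 0"
proof -
  have base: "cstar y * (g - l) = 0" if "(g, l) \<in> G" for g l
    using assms(1)
  proof (induction rule: right_span.induct)
    case (base g' l')
    then show ?case using orthogonal that by blast
  next
    case (add x1 y1 x2 y2)
    then show ?case by (simp add: cstar_add distrib_right)
  next
    case (scale x1 y1 c)
    then show ?case by (simp add: cstar_scaleC scaleC_mult_left)
  next
    case (mult x1 y1 h k)
    then show ?case by (simp add: cstar_mult mult.assoc)
  qed
  show ?thesis
    using assms(2)
  proof (induction rule: right_span.induct)
    case (add x1 y1 x2 y2)
    then show ?case by (simp add: algebra_simps)
  next
    case (scale x1 y1 c)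
    then show ?case by (simp add: scaleC_diff_right[symmetric] scaleC_mult_right)
  next
    case (mult x1 y1 h k)
    then show ?case by (simp add: left_diff_distrib[symmetric] mult.assoc[symmetric])
  qed (rule base)
qed

lemma right_span_norm_le:
  assumes "(x, y) \<in> right_span G"
  shows "norm y \<le> norm x"
proof (cases "y = 0")
  case False
  have "cstar y * y = cstar y * x"
    using right_span_orthogonal[OF assms assms] by (simp add: right_diff_distrib)
  then have "norm y * norm y = norm (cstar y * x)"
    by (metis cstar_identity)
  also have "\<dots> \<le> norm y * norm x"
    using norm_mult_ineq[of "cstar y" x] by simp
  finally show ?thesis using False by simp
qed simp

lemma right_span_lipschitz:
  assumes "(x, y) \<in> right_span G" "(x', y') \<in> right_span G"
  shows "norm (y - y') \<le> norm (x - x')"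
  using right_span_norm_le[OF right_span_diff[OF assms]] .

lemma right_span_unique: "(x, y) \<in> right_span G \<Longrightarrow> (x, y') \<in> right_span G \<Longrightarrow> y = y'"
  using right_span_lipschitz by fastforce

lemma right_span_range: "(x, y) \<in> right_span G \<Longrightarrow> (y, y) \<in> right_span G"
  by (induction rule: right_span.induct) (auto intro: right_span.intros range_closed)

lemma right_span_cstar_closed:
  assumes "(x, y) \<in> right_span G"
  shows "\<exists>z. (cstar x, z) \<in> right_span G"
  using assms
proof (induction rule: right_span.induct)
  case (base g l)
  then show ?case using cstar_closed by (blast intro: right_span.base)
next
  case (add x1 y1 x2 y2)
  then show ?case by (auto simp: cstar_add intro: right_span.add)
next
  case (scale x1 y1 c)
  then obtain z where "(cstar x1, z) \<in> right_span G" by blast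
  from right_span.scale[OF this, of "cnj c"] show ?case by (auto simp: cstar_scaleC)
next
  case (mult x1 y1 h k)
  obtain k' where "(cstar h, k') \<in> G" using cstar_closed mult.hyps(2) by blast
  moreover obtain z where "(cstar x1, z) \<in> right_span G" using mult.IH by blast
  ultimately show ?case
    using right_span_mult_closed[OF _ right_span.base] by (simp add: cstar_mult)
qed

definition span_domain :: "'a set" where
  "span_domain = fst ` right_span G"

definition span_map :: "'a \<Rightarrow> 'a" where
  "span_map x = (THE y. (x, y) \<in> right_span G)"

lemma span_map_eq: "(x, y) \<in> right_span G \<Longrightarrow> span_map x = y"
  unfolding span_map_def using right_span_unique by blast

lemma span_domainE:
  assumes "x \<in> span_domain"
  obtains "(x, span_map x) \<in> right_span G"
  using assms span_map_eq unfolding span_domain_def by force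

lemma span_domainI: "(x, y) \<in> right_span G \<Longrightarrow> x \<in> span_domain"
  unfolding span_domain_def by force

lemma cstar_subalg_closure_span_domain: "cstar_subalg (closure span_domain)"
proof (rule cstar_subalg_closure)
  obtain g l where "(g, l) \<in> G" using nonempty by auto
  from right_span.scale[OF right_span.base[OF this], of 0] show "0 \<in> span_domain"
    by (auto intro: span_domainI)
qed (auto elim!: span_domainE intro: span_domainI right_span.intros
    dest: right_span_mult_closed right_span_cstar_closed)

lemma closure_span_domain: "closure span_domain = cstar_gen (fst ` G)"
proof (rule cstar_gen_eq_closure[symmetric])
  show "cstar_subalg (closure span_domain)" by (rule cstar_subalg_closure_span_domain)
  show "fst ` G \<subseteq> span_domain"
    using span_domainI[OF right_span.base] by force
  show "span_domain \<subseteq> T" if "cstar_subalg T" "fst ` G \<subseteq> T" for T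
    using right_span_in_subalg[OF that] unfolding span_domain_def by force
qed

lemma span_map_uniformly_continuous: "uniformly_continuous_on span_domain span_map"
proof (rule lipschitz_on_uniformly_continuous)
  show "1-lipschitz_on span_domain span_map"
    by (rule lipschitz_onI) (auto simp: dist_norm elim!: span_domainE intro: right_span_lipschitz)
qed

definition proj :: "'a \<Rightarrow> 'a" where
  "proj = (SOME L. continuous_on (closure span_domain) L \<and> (\<forall>x\<in>span_domain. L x = span_map x))"

lemma proj_continuous: "continuous_on (closure span_domain) proj"
  and proj_eq_span_map: "x \<in> span_domain \<Longrightarrow> proj x = span_map x"
proof -
  obtain L where "uniformly_continuous_on (closure span_domain) L"
    and "\<And>x. x \<in> span_domain \<Longrightarrow> span_map x = L x"
    using uniformly_continuous_on_extension_on_closure[OF span_map_uniformly_continuous] by metis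
  then have "\<exists>L. continuous_on (closure span_domain) L \<and> (\<forall>x\<in>span_domain. L x = span_map x)"
    using uniformly_continuous_imp_continuous by metis
  from someI_ex[OF this] show "continuous_on (closure span_domain) proj"
    and "x \<in> span_domain \<Longrightarrow> proj x = span_map x"
    unfolding proj_def by auto
qed

lemma proj_right_span: "(x, y) \<in> right_span G \<Longrightarrow> proj x = y"
  by (simp add: proj_eq_span_map span_domainI span_map_eq)

lemma proj_prescribed: "(g, l) \<in> G \<Longrightarrow> proj g = l"
  by (rule proj_right_span[OF right_span.base])

lemma cstar_closure_span_domain: "x \<in> closure span_domain \<Longrightarrow> cstar x \<in> closure span_domain"
  using cstar_subalg_closure_span_domain unfolding cstar_subalg_def by blast

lemma proj_closure:
  assumes "x \<in> closure span_domain"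
  shows "proj x \<in> closure span_domain"
proof -
  have "proj ` span_domain \<subseteq> span_domain"
    by (auto simp: proj_eq_span_map elim!: span_domainE intro: span_domainI right_span_range)
  then have "proj ` closure span_domain \<subseteq> closure span_domain"
    using closure_subset by (intro image_closure_subset[OF proj_continuous]) auto
  with assms show ?thesis by blast
qed

lemma proj_idem:
  assumes "x \<in> closure span_domain"
  shows "proj (proj x) = proj x"
proof (rule continuous_eq_on_closure[OF _ proj_continuous _ assms])
  show "continuous_on (closure span_domain) (\<lambda>x. proj (proj x))"
    by (rule continuous_on_compose2[OF proj_continuous proj_continuous]) (auto intro: proj_closure)
  fix x assume "x \<in> span_domain"
  then have "(x, span_map x) \<in> right_span G" by (rule span_domainE)
  then show "proj (proj x) = proj x"
    using proj_right_span right_span_range by metis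
qed

lemma proj_centralizer:
  assumes "x \<in> closure span_domain" "y \<in> closure span_domain"
  shows "x * proj y = cstar (proj (cstar x)) * y"
proof -
  let ?D = "closure span_domain"
  have on_span: "x * proj y = cstar (proj (cstar x)) * y"
    if xy: "x \<in> span_domain" "y \<in> span_domain" for x y
  proof -
    obtain u v where u: "(cstar x, u) \<in> right_span G" and v: "(y, v) \<in> right_span G"
      using xy right_span_cstar_closed unfolding span_domain_def by force
    have uy: "cstar u * y = cstar u * v"
      using right_span_orthogonal[OF u v] by (simp add: right_diff_distrib)
    have "cstar (cstar v * (cstar x - u)) = 0"
      using right_span_orthogonal[OF v u] by simp
    then have xv: "x * v = cstar u * v"
      by (simp add: cstar_mult cstar_diff cstar_cstar left_diff_distrib)
    show ?thesis
      using u v uy xv by (simp add: proj_right_span)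
  qed
  have cont_left: "continuous_on (?D \<times> ?D) (\<lambda>p. fst p * proj (snd p))"
    by (intro continuous_intros continuous_on_compose2[OF proj_continuous]) auto
  have cont_right: "continuous_on (?D \<times> ?D) (\<lambda>p. cstar (proj (cstar (fst p))) * snd p)"
    by (intro continuous_intros continuous_on_compose2[OF continuous_on_cstar[of UNIV]]
        continuous_on_compose2[OF proj_continuous]
        continuous_on_compose2[OF continuous_on_cstar[of UNIV]])
      (auto intro: cstar_closure_span_domain)
  have "(\<lambda>p. fst p * proj (snd p)) (x, y) = (\<lambda>p. cstar (proj (cstar (fst p))) * snd p) (x, y)"
    by (rule continuous_eq_on_closure[of "span_domain \<times> span_domain"])
      (use cont_left cont_right on_span assms in \<open>auto simp: closure_Times\<close>)
  then show ?thesis by simp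
qed

theorem multiplier_projection_proj:
  "multiplier_projection (cstar_gen (fst ` G)) proj (\<lambda>x. cstar (proj (cstar x)))"
  unfolding multiplier_projection_def double_centralizer_def closure_span_domain[symmetric]
proof (intro conjI ballI)
  show "proj ` closure span_domain \<subseteq> closure span_domain"
    "(\<lambda>x. cstar (proj (cstar x))) ` closure span_domain \<subseteq> closure span_domain"
    by (auto intro!: cstar_closure_span_domain proj_closure)
  fix x assume x: "x \<in> closure span_domain"
  show "proj (proj x) = proj x" using x by (rule proj_idem)
  show "cstar (proj (cstar (cstar (proj (cstar x))))) = cstar (proj (cstar x))"
    using proj_idem[OF cstar_closure_span_domain[OF x]] by (simp add: cstar_cstar)
  show "proj x = cstar (cstar (proj (cstar (cstar x))))" by (simp add: cstar_cstar)
  fix y assume "y \<in> closure span_domain"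
  with x show "x * proj y = cstar (proj (cstar x)) * y" by (rule proj_centralizer)
qed simp

end

section \<open>The tail construction\<close>

definition first_only :: "(nat \<Rightarrow> 'a::zero) \<Rightarrow> nat \<Rightarrow> 'a" where
  "first_only f = (\<lambda>n. if n = 0 then f 0 else 0)"

definition drop_first :: "(nat \<Rightarrow> 'a::zero) \<Rightarrow> nat \<Rightarrow> 'a" where
  "drop_first f = (\<lambda>n. if n = 0 then 0 else f n)"

lemma first_only_idem [simp]: "first_only (first_only f) = first_only f"
  by (simp add: first_only_def)

lemma drop_first_0 [simp]: "drop_first f 0 = 0"
  by (simp add: drop_first_def)

locale correspondence =
  fixes ip :: "'x::cbanach \<Rightarrow> 'x \<Rightarrow> 'a::cstar_alg"
    and rmul :: "'x \<Rightarrow> 'a \<Rightarrow> 'x"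
    and phi :: "'a \<Rightarrow> 'x \<Rightarrow> 'x"
  assumes correspondence: "cstar_correspondence ip rmul phi"
begin

lemmas correspondence_unfolded =
  correspondence[unfolded cstar_correspondence_def hilbert_module_def]

lemma ip_add_right: "ip x (y + z) = ip x y + ip x z"
  using correspondence_unfolded by metis

lemma ip_self_eq_zero: "ip x x = 0 \<Longrightarrow> x = 0"
  using correspondence_unfolded by metis

lemma rmul_add_left: "rmul (x + y) a = rmul x a + rmul y a"
  using correspondence_unfolded by metis

lemma rmul_add_right: "rmul x (a + b) = rmul x a + rmul x b"
  using correspondence_unfolded by metis

lemma phi_add: "phi (a + b) x = phi a x + phi b x"
  using correspondence_unfolded by metis

lemma phi_mult: "phi (a * b) x = phi a (phi b x)"
  using correspondence_unfolded by metis

lemma phi_adjoint: "ip (phi (cstar a) x) y = ip x (phi a y)"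
  using correspondence_unfolded by metis

lemma ip_zero_right [simp]: "ip x 0 = 0"
  using ip_add_right[of x 0 0] by simp

lemma rmul_zero_left [simp]: "rmul 0 a = 0"
  using rmul_add_left[of 0 0 a] by simp

lemma rmul_zero_right [simp]: "rmul x 0 = 0"
  using rmul_add_right[of x 0 0] by simp

lemma phi_zero_left [simp]: "phi 0 x = 0"
  using phi_add[of 0 0 x] by simp

lemma phi_zero_right [simp]: "phi a 0 = 0"
  using phi_mult[of a 0 0] by simp

lemma zero_in_ker_phi: "0 \<in> ker_phi phi"
  by (simp add: ker_phi_def)

lemma ker_phi_mult: "a \<in> ker_phi phi \<Longrightarrow> b \<in> ker_phi phi \<Longrightarrow> a * b \<in> ker_phi phi"
  by (simp add: ker_phi_def phi_mult)

lemma ker_phi_cstar: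
  assumes "b \<in> ker_phi phi"
  shows "cstar b \<in> ker_phi phi"
  unfolding ker_phi_def
proof (intro CollectI allI)
  fix x
  have "ip (phi (cstar b) x) (phi (cstar b) x) = 0"
    using assms by (simp add: phi_adjoint ker_phi_def)
  then show "phi (cstar b) x = 0" by (rule ip_self_eq_zero)
qed

lemma tail_dominated:
  assumes "f \<in> tail phi" "\<And>n. g n \<in> ker_phi phi" "\<And>n. norm (g n) \<le> norm (f n)"
  shows "g \<in> tail phi"
proof -
  have "(\<lambda>n. norm (f n)) \<longlonglongrightarrow> 0" using assms(1) by (simp add: tail_def)
  then have "(\<lambda>n. norm (g n)) \<longlonglongrightarrow> 0"
    by (rule Lim_null_comparison[rotated]) (use assms(3) in simp)
  then show ?thesis using assms(2) by (simp add: tail_def)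
qed

lemma tail_in_ker_phi: "f \<in> tail phi \<Longrightarrow> f n \<in> ker_phi phi"
  by (simp add: tail_def)

lemma tail_zero [simp]: "(\<lambda>n. 0) \<in> tail phi"
  by (simp add: tail_def zero_in_ker_phi)

lemma tail_cstar: "f \<in> tail phi \<Longrightarrow> (\<lambda>n. cstar (f n)) \<in> tail phi"
  by (rule tail_dominated[of f]) (simp_all add: ker_phi_cstar tail_in_ker_phi)

lemma tail_mult:
  assumes "f \<in> tail phi" "g \<in> tail phi"
  shows "(\<lambda>n. f n * g n) \<in> tail phi"
proof -
  have "(\<lambda>n. norm (f n) * norm (g n)) \<longlonglongrightarrow> 0"
    using tendsto_mult[of "\<lambda>n. norm (f n)" 0 _ "\<lambda>n. norm (g n)" 0] assms
    by (simp add: tail_def)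
  then have "(\<lambda>n. norm (f n * g n)) \<longlonglongrightarrow> 0"
    by (rule Lim_null_comparison[rotated]) (simp add: norm_mult_ineq)
  then show ?thesis using assms by (simp add: tail_def ker_phi_mult)
qed

lemma tail_first_only: "f \<in> tail phi \<Longrightarrow> first_only f \<in> tail phi"
  by (rule tail_dominated[of f]) (simp_all add: first_only_def zero_in_ker_phi tail_in_ker_phi)

lemma tail_drop_first: "f \<in> tail phi \<Longrightarrow> drop_first f \<in> tail phi"
  by (rule tail_dominated[of f]) (simp_all add: drop_first_def zero_in_ker_phi tail_in_ker_phi)

end

locale tail_representation = correspondence ip rmul phi
  for ip :: "'x::cbanach \<Rightarrow> 'x \<Rightarrow> 'a::cstar_alg" and rmul phi +
  fixes rpi :: "'a \<times> (nat \<Rightarrow> 'a) \<Rightarrow> 'c::cstar_alg"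
    and t :: "'x \<times> (nat \<Rightarrow> 'a) \<Rightarrow> 'c"
  assumes representation: "is_rep ip rmul phi rpi t"
begin

lemmas representation_unfolded = representation[unfolded is_rep_def B_add_def B_mult_def
  B_star_def Y_add_def Y_ip_def Y_lmul_def Y_rmul_def fst_conv snd_conv]

context
  fixes f g :: "nat \<Rightarrow> 'a"
  assumes tails: "f \<in> tail phi" "g \<in> tail phi"
begin

lemma rpi_add: "rpi (a + b, \<lambda>n. f n + g n) = rpi (a, f) + rpi (b, g)"
  using representation_unfolded tails by simp

lemma rpi_mult: "rpi (a, f) * rpi (b, g) = rpi (a * b, \<lambda>n. f n * g n)"
  using representation_unfolded tails by simp

lemma t_add: "t (\<xi> + \<nu>, \<lambda>n. f n + g n) = t (\<xi>, f) + t (\<nu>, g)"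
  using representation_unfolded tails by simp

lemma t_inner: "cstar (t (\<xi>, f)) * t (\<nu>, g) = rpi (ip \<xi> \<nu>, \<lambda>n. cstar (f n) * g n)"
  using representation_unfolded tails by simp

lemma rpi_t: "rpi (a, f) * t (\<xi>, g) = t (phi a \<xi>, \<lambda>n. if n = 0 then a * g 0 else f (n - 1) * g n)"
  using representation_unfolded tails by simp

lemma t_rpi: "t (\<xi>, g) * rpi (a, f) = t (rmul \<xi> a, \<lambda>n. g n * f n)"
  using representation_unfolded tails by simp

end

lemma rpi_cstar: "f \<in> tail phi \<Longrightarrow> cstar (rpi (a, f)) = rpi (cstar a, \<lambda>n. cstar (f n))"
  using representation_unfolded by simp

lemma rpi_zero [simp]: "rpi (0, \<lambda>n. 0) = 0"
  using rpi_add[OF tail_zero tail_zero, of 0 0] by simp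

lemma t_zero [simp]: "t (0, \<lambda>n. 0) = 0"
  using t_add[OF tail_zero tail_zero, of 0 0] by simp

lemma rpi_split: "f \<in> tail phi \<Longrightarrow> rpi (a, f) = rpi (a, \<lambda>n. 0) + rpi (0, f)"
  using rpi_add[OF tail_zero, of f a 0] by simp

lemma t_split: "f \<in> tail phi \<Longrightarrow> t (\<xi>, f) = t (\<xi>, \<lambda>n. 0) + t (0, f)"
  using t_add[OF tail_zero, of f \<xi> 0] by simp

lemma t_split_first: "f \<in> tail phi \<Longrightarrow> t (\<xi>, f) = t (\<xi>, first_only f) + t (0, drop_first f)"
proof -
  assume f: "f \<in> tail phi"
  have "(\<lambda>n. first_only f n + drop_first f n) = f"
    by (auto simp: first_only_def drop_first_def)
  then show ?thesis using t_add[OF tail_first_only[OF f] tail_drop_first[OF f], of \<xi> 0] by simp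
qed

lemma rpi_orthogonal_kernel:
  shows "f \<in> tail phi \<Longrightarrow> cstar (rpi (a, \<lambda>n. 0)) * rpi (0, f) = 0"
    and "k \<in> tail phi \<Longrightarrow> k 0 = 0 \<Longrightarrow> cstar (rpi (a, \<lambda>n. 0)) * t (0, k) = 0"
    and "f \<in> tail phi \<Longrightarrow> cstar (rpi (a, \<lambda>n. 0)) * cstar (t (0, f)) = 0"
proof -
  have star: "cstar (rpi (a, \<lambda>n. 0)) = rpi (cstar a, \<lambda>n. 0)"
    using rpi_cstar[OF tail_zero] by simp
  show "cstar (rpi (a, \<lambda>n. 0)) * rpi (0, f) = 0" if f: "f \<in> tail phi" for f
    using rpi_mult[OF tail_zero f] star by simp
  show "cstar (rpi (a, \<lambda>n. 0)) * t (0, k) = 0" if k: "k \<in> tail phi" "k 0 = 0" for k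
    using rpi_t[OF tail_zero k(1), of "cstar a" 0] star k(2) by (simp cong: if_cong)
  show "cstar (rpi (a, \<lambda>n. 0)) * cstar (t (0, f)) = 0" if f: "f \<in> tail phi" for f
    using t_rpi[OF tail_zero f, of 0 a] by (simp add: cstar_mult[symmetric])
qed

lemma t_first_only_orthogonal_kernel:
  assumes f: "f \<in> tail phi"
  shows "h \<in> tail phi \<Longrightarrow> cstar (t (\<xi>, first_only f)) * rpi (0, h) = 0"
    and "k \<in> tail phi \<Longrightarrow> k 0 = 0 \<Longrightarrow> cstar (t (\<xi>, first_only f)) * t (0, k) = 0"
    and "h \<in> tail phi \<Longrightarrow> cstar (t (\<xi>, first_only f)) * cstar (t (0, h)) = 0"
proof -
  show "cstar (t (\<xi>, first_only f)) * rpi (0, h) = 0" if h: "h \<in> tail phi" for h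
  proof -
    have "cstar (rpi (0, h)) * t (\<xi>, first_only f) = 0"
      using rpi_cstar[OF h, of 0] rpi_t[OF tail_cstar[OF h] tail_first_only[OF f], of 0 \<xi>]
      by (simp add: first_only_def cong: if_cong)
    then show ?thesis by (subst cstar_mult_eq_zero_commute)
  qed
  show "cstar (t (\<xi>, first_only f)) * t (0, k) = 0" if k: "k \<in> tail phi" "k 0 = 0" for k
  proof -
    have "(\<lambda>n. cstar (first_only f n) * k n) = (\<lambda>n. 0)"
      using k(2) by (auto simp: first_only_def)
    then show ?thesis using t_inner[OF tail_first_only[OF f] k(1), of \<xi> 0] by simp
  qed
  show "cstar (t (\<xi>, first_only f)) * cstar (t (0, h)) = 0" if h: "h \<in> tail phi" for h
  proof -
    have "cstar (t (0, h)) * t (0, h) * t (\<xi>, first_only f) = 0"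
      using t_inner[OF h h, of 0 0]
        rpi_t[OF tail_mult[OF tail_cstar[OF h] h] tail_first_only[OF f], of 0 \<xi>]
      by (simp add: first_only_def cong: if_cong)
    then have "t (0, h) * t (\<xi>, first_only f) = 0"
      by (rule mult_eq_zero_if_cstar_self_mult_eq_zero)
    then show ?thesis by (simp add: cstar_mult[symmetric])
  qed
qed

lemma t_adjoint_orthogonal_kernel:
  shows "h \<in> tail phi \<Longrightarrow> cstar (cstar (t (\<xi>, \<lambda>n. 0))) * rpi (0, h) = 0"
    and "k \<in> tail phi \<Longrightarrow> k 0 = 0 \<Longrightarrow> cstar (cstar (t (\<xi>, \<lambda>n. 0))) * t (0, k) = 0"
    and "h \<in> tail phi \<Longrightarrow> cstar (cstar (t (\<xi>, \<lambda>n. 0))) * cstar (t (0, h)) = 0"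
proof -
  show "cstar (cstar (t (\<xi>, \<lambda>n. 0))) * rpi (0, h) = 0" if h: "h \<in> tail phi" for h
    using t_rpi[OF h tail_zero, of \<xi> 0] by (simp add: cstar_cstar)
  show "cstar (cstar (t (\<xi>, \<lambda>n. 0))) * t (0, k) = 0" if k: "k \<in> tail phi" "k 0 = 0" for k
  proof -
    have "cstar (t (\<xi>, \<lambda>n. 0)) * t (\<xi>, \<lambda>n. 0) * t (0, k) = 0"
      using t_inner[OF tail_zero tail_zero, of \<xi> \<xi>] rpi_t[OF tail_zero k(1), of "ip \<xi> \<xi>" 0] k(2)
      by (simp cong: if_cong)
    then show ?thesis
      unfolding cstar_cstar by (rule mult_eq_zero_if_cstar_self_mult_eq_zero)
  qed
  show "cstar (cstar (t (\<xi>, \<lambda>n. 0))) * cstar (t (0, h)) = 0" if h: "h \<in> tail phi" for h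
  proof -
    let ?hh = "\<lambda>n. cstar (h n) * h n"
    have hh: "?hh \<in> tail phi" by (rule tail_mult[OF tail_cstar[OF h] h])
    have "cstar (rpi (0, ?hh)) * cstar (t (\<xi>, \<lambda>n. 0)) = 0"
      using t_rpi[OF hh tail_zero, of \<xi> 0] by (simp add: cstar_mult[symmetric])
    moreover have "cstar (rpi (0, ?hh)) = rpi (0, ?hh)"
      using rpi_cstar[OF hh, of 0] by (simp add: cstar_mult cstar_cstar)
    moreover have "cstar (t (0, h)) * t (0, h) = rpi (0, ?hh)"
      using t_inner[OF h h, of 0 0] by simp
    ultimately have "cstar (t (0, h)) * t (0, h) * cstar (t (\<xi>, \<lambda>n. 0)) = 0"
      by simp
    then have "t (0, h) * cstar (t (\<xi>, \<lambda>n. 0)) = 0"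
      by (rule mult_eq_zero_if_cstar_self_mult_eq_zero)
    then show ?thesis
      by (subst cstar_mult_eq_zero_commute) (simp add: cstar_cstar)
  qed
qed

(* The third family encodes t(xi, f) p = t(xi, 0) as p t(xi, f)* = t(xi, 0)*. *)
inductive_set proj_pairs :: "('c \<times> 'c) set" where
  rpi: "f \<in> tail phi \<Longrightarrow> (rpi (a, f), rpi (a, \<lambda>n. 0)) \<in> proj_pairs"
| t: "f \<in> tail phi \<Longrightarrow> (t (\<xi>, f), t (\<xi>, first_only f)) \<in> proj_pairs"
| t_adjoint: "f \<in> tail phi \<Longrightarrow> (cstar (t (\<xi>, f)), cstar (t (\<xi>, \<lambda>n. 0))) \<in> proj_pairs"

lemma proj_pairs_kernel_cases:
  assumes "(g, l) \<in> proj_pairs"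
  obtains (rpi) a f where "f \<in> tail phi" "l = rpi (a, \<lambda>n. 0)" "g - l = rpi (0, f)"
  | (t) \<xi> f where "f \<in> tail phi" "l = t (\<xi>, first_only f)" "g - l = t (0, drop_first f)"
  | (t_adjoint) \<xi> f where "f \<in> tail phi" "l = cstar (t (\<xi>, \<lambda>n. 0))" "g - l = cstar (t (0, f))"
  using assms
proof cases
  case (rpi f a)
  then have "g - l = rpi (0, f)" using rpi_split[of f a] by simp
  with rpi show ?thesis using that(1) by blast
next
  case (t f \<xi>)
  then have "g - l = t (0, drop_first f)" using t_split_first[of f \<xi>] by simp
  with t show ?thesis using that(2) by blast
next
  case (t_adjoint f \<xi>)
  then have "g - l = cstar (t (0, f))" using t_split[of f \<xi>] by (simp add: cstar_add)
  with t_adjoint show ?thesis using that(3) by blast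
qed

lemma proj_pairs_orthogonal:
  assumes "(g, l) \<in> proj_pairs" "(g', l') \<in> proj_pairs"
  shows "cstar l * (g' - l') = 0"
  using assms(1)
proof (cases rule: proj_pairs_kernel_cases)
  case (rpi a f)
  from assms(2) show ?thesis
    by (cases rule: proj_pairs_kernel_cases)
      (auto simp: rpi rpi_orthogonal_kernel tail_drop_first)
next
  case (t \<xi> f)
  from assms(2) show ?thesis
    by (cases rule: proj_pairs_kernel_cases)
      (auto simp: t t_first_only_orthogonal_kernel tail_drop_first)
next
  case (t_adjoint \<xi> f)
  from assms(2) show ?thesis
    by (cases rule: proj_pairs_kernel_cases)
      (auto simp: t_adjoint t_adjoint_orthogonal_kernel tail_drop_first)
qed

sublocale projection_prescription proj_pairs
proof
  fix g l assume "(g, l) \<in> proj_pairs"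
  then show "\<exists>l'. (cstar g, l') \<in> proj_pairs"
  proof cases
    case (rpi f a)
    then show ?thesis using proj_pairs.rpi[OF tail_cstar] by (auto simp: rpi_cstar)
  qed (auto simp: cstar_cstar intro: proj_pairs.intros)
  from \<open>(g, l) \<in> proj_pairs\<close> show "(l, l) \<in> proj_pairs"
  proof cases
    case (t f \<xi>)
    then show ?thesis using proj_pairs.t[OF tail_first_only] by auto
  qed (auto intro: proj_pairs.intros[OF tail_zero])
next
  show "proj_pairs \<noteq> {}" using proj_pairs.rpi[OF tail_zero] by blast
qed (rule proj_pairs_orthogonal)

lemma cstar_gen_proj_pairs: "cstar_gen (fst ` proj_pairs) = Cstar_rep phi rpi t"
proof -
  have "fst ` proj_pairs =
      (rpi ` (UNIV \<times> tail phi) \<union> t ` (UNIV \<times> tail phi)) \<union> cstar ` t ` (UNIV \<times> tail phi)"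
    by (auto elim!: proj_pairs.cases intro: rev_image_eqI proj_pairs.intros)
  then show ?thesis by (simp add: Cstar_rep_def cstar_gen_Un_cstar)
qed

lemma proj_t: "f \<in> tail phi \<Longrightarrow> proj (t (\<xi>, f)) = t (\<xi>, first_only f)"
  by (rule proj_prescribed[OF proj_pairs.t])

lemma proj_rpi: "f \<in> tail phi \<Longrightarrow> proj (rpi (a, f)) = rpi (a, \<lambda>n. 0)"
  by (rule proj_prescribed[OF proj_pairs.rpi])

lemma proj_adjoint_t: "f \<in> tail phi \<Longrightarrow> cstar (proj (cstar (t (\<xi>, f)))) = t (\<xi>, \<lambda>n. 0)"
  by (simp add: proj_prescribed[OF proj_pairs.t_adjoint] cstar_cstar)

lemma proj_adjoint_rpi:
  assumes "f \<in> tail phi"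
  shows "cstar (proj (cstar (rpi (a, f)))) = rpi (a, \<lambda>n. 0)"
proof -
  have "cstar (proj (cstar (rpi (a, f)))) = cstar (rpi (cstar a, \<lambda>n. 0))"
    using assms by (simp add: rpi_cstar proj_rpi tail_cstar)
  also have "\<dots> = rpi (a, \<lambda>n. 0)"
    using rpi_cstar[OF tail_zero, of "cstar a"] by (simp add: cstar_cstar)
  finally show ?thesis .
qed

end

theorem mainTheorem10:
  fixes ip :: "'x::cbanach \<Rightarrow> 'x \<Rightarrow> 'a::cstar_alg"
    and rmul :: "'x \<Rightarrow> 'a \<Rightarrow> 'x"
    and phi :: "'a \<Rightarrow> 'x \<Rightarrow> 'x"
    and rpi :: "'a \<times> (nat \<Rightarrow> 'a) \<Rightarrow> 'c::cstar_alg"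
    and t :: "'x \<times> (nat \<Rightarrow> 'a) \<Rightarrow> 'c"
  assumes "cstar_correspondence ip rmul phi"
    and "is_rep ip rmul phi rpi t"
  shows "\<exists>L R. multiplier_projection (Cstar_rep phi rpi t) L R \<and>
    (\<forall>a \<xi> f. f \<in> tail phi \<longrightarrow>
       L (t (\<xi>, f)) = t (\<xi>, \<lambda>n. if n = 0 then f 0 else 0) \<and>
       R (t (\<xi>, f)) = t (\<xi>, \<lambda>n. 0) \<and>
       L (rpi (a, f)) = rpi (a, \<lambda>n. 0) \<and>
       R (rpi (a, f)) = rpi (a, \<lambda>n. 0))"
proof -
  interpret tail_representation ip rmul phi rpi t
    using assms by unfold_locales
  have "multiplier_projection (Cstar_rep phi rpi t) proj (\<lambda>x. cstar (proj (cstar x)))"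
    using multiplier_projection_proj by (simp add: cstar_gen_proj_pairs)
  then show ?thesis
    using proj_t proj_adjoint_t proj_rpi proj_adjoint_rpi unfolding first_only_def by blast
qed

end
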